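(* Let $M=M_n\to\infty$ as $n\to\infty$. Assume that (i) the combining function is of the form $\psi(p_1,\dots,p_r)=\sum_{j=1}^r w_j\varphi(p_j)$ with weights $w_j>0$, where $\varphi$ is decreasing, non-negative and one-to-one from $(0,1)$ to $(0,\infty)$; (ii) there exists $j_0\in\{1,\dots,r\}$ such that the null hypothesis $H_0^{(j_0)}$ does not hold and $\Pr(T_{n,j_0}^{[1]}\ge T_{n,j_0})\to0$; (iii) for every $j\in\{1,\dots,r\}$, the bootstrap replicates $T_{n,j}^{[1]},\dots,T_{n,j}^{[M_n]}$ contain no ties. Then $p_{n,M_n}(W_{n,M_n}^{[0]})\to0$ in probability.
   Context: Setting: Let $\mathbf{X}_n$ denote the available data. For $j\in\{1,\dots,r\}$, let $T_{n,j}=T_{n,j}(\mathbf{X}_n)$ be real-valued test statistics, large values of $T_{n,j}$ providing evidence against a null hypothesis $H_0^{(j)}$; let $\mathbf{T}_n=(T_{n,1},\dots,T_{n,r})$. Let $\mathbf{V}_n^{[1]},\mathbf{V}_n^{[2]},\dots$ be i.i.d. random vectors representing the additional randomness of a resampling mechanism (independent of the data) and let $\mathbf{T}_n^{[i]}=(T_{n,1}^{[i]},\dots,T_{n,r}^{[i]})=\mathbf{T}_n^{[i]}(\mathbf{X}_n,\mathbf{V}_n^{[i]})$, $i\ge1$, be bootstrap replicates of $\mathbf{T}_n$; set $\mathbf{T}_n^{[0]}=\mathbf{T}_n$. For an integer $M$, $i\in\{0,\dots,M\}$, $j\in\{1,\dots,r\}$, $$p_{n,M}(T_{n,j}^{[i]})=\frac{1}{M+1}\Big\{\frac12+\sum_{k=1}^M\mathbf{1}(T_{n,j}^{[k]}\ge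 T_{n,j}^{[i]})\Big\},\qquad W_{n,M}^{[i]}=\psi\{p_{n,M}(T_{n,1}^{[i]}),\dots,p_{n,M}(T_{n,r}^{[i]})\},$$ and $p_{n,M}(W_{n,M}^{[0]})=\frac1M\sum_{k=1}^M\mathbf{1}(W_{n,M}^{[k]}\ge W_{n,M}^{[0]})$. *)

theory Defs
  imports "HOL-Probability.Probability"
begin

text \<open>Bootstrap p-value of the i-th entry of a sequence t (t 0 = original statistic,
  t 1, ..., t m = bootstrap replicates):
  p_{n,M}(t^[i]) = (1/(M+1)) (1/2 + #{k in 1..M. t k >= t i}).\<close>
definition boot_pval :: "nat \<Rightarrow> (nat \<Rightarrow> real) \<Rightarrow> nat \<Rightarrow> real" where
  "boot_pval m t i = (1 / (real m + 1)) * (1 / 2 + real (card {k \<in> {1..m}. t k \<ge> t i}))"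

definition comb_stat :: "((nat \<Rightarrow> real) \<Rightarrow> real) \<Rightarrow> nat \<Rightarrow> (nat \<Rightarrow> nat \<Rightarrow> real) \<Rightarrow> nat \<Rightarrow> real" where
  "comb_stat psi m T i = psi (\<lambda>j. boot_pval m (\<lambda>k. T k j) i)"

definition comb_pval :: "nat \<Rightarrow> (nat \<Rightarrow> real) \<Rightarrow> real" where
  "comb_pval m W = (1 / real m) * real (card {k \<in> {1..m}. W k \<ge> W 0})"

definition tendsto_in_prob :: "'a measure \<Rightarrow> (nat \<Rightarrow> 'a \<Rightarrow> real) \<Rightarrow> real \<Rightarrow> bool" where
  "tendsto_in_prob P Y c \<longleftrightarrow>
     (\<forall>e>0. (\<lambda>n. measure P {\<omega> \<in> space P. \<bar>Y n \<omega> - c\<bar> > e}) \<longlonglongrightarrow> 0)"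

end

theory Submission
  imports Defs
begin

(*
  Write p_j(k) for the bootstrap p-value of the k-th replicate in coordinate j. A ranking
  argument shows that at most (M+1)c of the replicates have p_j(k) < c, whatever the ties. If the original combined statistic W^[0] exceeds
  phi(c) * sum_j w_j, then every replicate with W^[k] >= W^[0] has p_j(k) < c for some j, so
  p(W^[0]) <= r(M+1)c/M <= 2rc. As phi is decreasing and maps onto (0,oo), W^[0] is that large
  as soon as p_{j0}(T^[0]) <= eta for a suitable eta > 0. Finally p_{j0}(T^[0]) > eta forces at
  least eta M/2 replicates to exceed T_{n,j0}; each of them does so with probability
  q_n = Pr(T_{n,j0}^[1] >= T_{n,j0}), because the data are independent of every single V^[i], so by Markov's inequality this happens
  with probability at most 2 q_n / eta, which tends to 0.
*)

lemma boot_pval_gt_0: "0 < boot_pval m t i"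
  unfolding boot_pval_def by (simp add: add_pos_nonneg)

lemma boot_pval_less_1: "boot_pval m t i < 1"
proof -
  have "card {k \<in> {1..m}. t i \<le> t k} \<le> card {1..m}"
    by (rule card_mono) auto
  then show ?thesis
    unfolding boot_pval_def by (simp add: field_simps)
qed

lemma card_boot_pval_less_le:
  assumes "0 \<le> c"
  shows "real (card {k \<in> {1..m}. boot_pval m t k < c}) \<le> (real m + 1) * c"
proof -
  define S where "S = {k \<in> {1..m}. boot_pval m t k < c}"
  have "real (card S) \<le> (real m + 1) * c"
  proof (cases "S = {}")
    case True
    then show ?thesis using assms by simp
  next
    case False
    obtain k0 where k0: "k0 \<in> S" "\<And>k. k \<in> S \<Longrightarrow> t k0 \<le> t k"
      using arg_min_if_finite[of S t] False by (force simp: S_def not_less)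
    have "card S \<le> card {k \<in> {1..m}. t k0 \<le> t k}"
      using k0(2) by (intro card_mono) (auto simp: S_def)
    moreover have "boot_pval m t k0 < c"
      using k0(1) by (simp add: S_def)
    ultimately show ?thesis
      unfolding boot_pval_def by (simp add: field_simps)
  qed
  then show ?thesis by (simp add: S_def)
qed

lemma card_ge_if_boot_pval_gt:
  assumes "\<eta> < boot_pval m t 0" and "1 \<le> real m * \<eta>"
  shows "real m * \<eta> / 2 \<le> real (card {k \<in> {1..m}. t 0 \<le> t k})"
proof -
  have "0 < real m * \<eta>" using assms(2) by linarith
  then have "0 < \<eta>" by (simp add: zero_less_mult_iff)
  then show ?thesis using assms unfolding boot_pval_def by (simp add: field_simps)
qed

lemma comb_pval_weighted_sum_le:
  fixes T :: "nat \<Rightarrow> nat \<Rightarrow> real" and \<phi> :: "real \<Rightarrow> real" and w :: "nat \<Rightarrow> real"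
  assumes m: "1 \<le> m" and c: "c \<in> {0<..<1}"
    and w_nonneg: "\<And>j. j \<in> {1..r} \<Longrightarrow> 0 \<le> w j"
    and \<phi>_decr: "\<And>x y. x \<in> {0<..<1} \<Longrightarrow> y \<in> {0<..<1} \<Longrightarrow> x \<le> y \<Longrightarrow> \<phi> y \<le> \<phi> x"
    and \<phi>_nonneg: "\<And>x. x \<in> {0<..<1} \<Longrightarrow> 0 \<le> \<phi> x"
    and j0: "j0 \<in> {1..r}"
    and large: "\<phi> c * (\<Sum>j = 1..r. w j) < w j0 * \<phi> (boot_pval m (\<lambda>k. T k j0) 0)"
  shows "comb_pval m (comb_stat (\<lambda>p. \<Sum>j = 1..r. w j * \<phi> (p j)) m T)
           \<le> 2 * real r * c"
proof -
  define W where "W = comb_stat (\<lambda>p. \<Sum>j = 1..r. w j * \<phi> (p j)) m T"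
  define S where "S j = {k \<in> {1..m}. boot_pval m (\<lambda>k. T k j) k < c}" for j
  have pval: "boot_pval m t i \<in> {0<..<1}" for t i
    using boot_pval_gt_0 boot_pval_less_1 by auto
  have "0 \<le> w j * \<phi> (boot_pval m (\<lambda>k. T k j) 0)" if "j \<in> {1..r}" for j
    using that by (intro mult_nonneg_nonneg w_nonneg \<phi>_nonneg pval)
  then have W0: "w j0 * \<phi> (boot_pval m (\<lambda>k. T k j0) 0) \<le> W 0"
    unfolding W_def comb_stat_def using j0 by (intro member_le_sum) auto
  have "{k \<in> {1..m}. W 0 \<le> W k} \<subseteq> (\<Union>j\<in>{1..r}. S j)"
  proof (rule subsetI, rule ccontr)
    fix k assume k: "k \<in> {k \<in> {1..m}. W 0 \<le> W k}" and notin: "k \<notin> (\<Union>j\<in>{1..r}. S j)"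
    have "c \<le> boot_pval m (\<lambda>k. T k j) k" if "j \<in> {1..r}" for j
      using k notin that by (auto simp: S_def not_less)
    then have "w j * \<phi> (boot_pval m (\<lambda>k. T k j) k) \<le> w j * \<phi> c" if "j \<in> {1..r}" for j
      using that by (intro mult_left_mono \<phi>_decr c pval w_nonneg)
    then have "W k \<le> (\<Sum>j = 1..r. w j * \<phi> c)"
      unfolding W_def comb_stat_def by (intro sum_mono)
    also have "\<dots> = \<phi> c * (\<Sum>j = 1..r. w j)"
      by (simp add: sum_distrib_left mult.commute)
    finally have "W k \<le> \<phi> c * (\<Sum>j = 1..r. w j)" .
    moreover have "W 0 \<le> W k" using k by simp
    ultimately show False using W0 large by linarith
  qed
  then have "card {k \<in> {1..m}. W 0 \<le> W k} \<le> card (\<Union>j\<in>{1..r}. S j)"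
    by (intro card_mono) (simp_all add: S_def)
  also have "\<dots> \<le> (\<Sum>j = 1..r. card (S j))"
    by (rule card_UN_le) simp
  finally have "real (card {k \<in> {1..m}. W 0 \<le> W k}) \<le> (\<Sum>j = 1..r. real (card (S j)))"
    unfolding of_nat_sum[symmetric] by (rule of_nat_mono)
  also have "\<dots> \<le> (\<Sum>j = 1..r. (real m + 1) * c)"
    unfolding S_def using c by (intro sum_mono card_boot_pval_less_le) simp
  also have "\<dots> \<le> (\<Sum>j = 1..r. 2 * real m * c)"
    using m c by (intro sum_mono mult_right_mono) simp_all
  finally have "real (card {k \<in> {1..m}. W 0 \<le> W k}) / real m \<le> 2 * real r * c"
    using m by (simp add: divide_le_eq mult_ac)
  then show ?thesis
    unfolding comb_pval_def W_def[symmetric] by simp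
qed

lemma large_near_0_if_surj:
  fixes \<phi> :: "real \<Rightarrow> real"
  assumes surj: "{0<..} \<subseteq> \<phi> ` {0<..<1}"
    and \<phi>_decr: "\<And>x y. x \<in> {0<..<1} \<Longrightarrow> y \<in> {0<..<1} \<Longrightarrow> x \<le> y \<Longrightarrow> \<phi> y \<le> \<phi> x"
    and a: "0 < a"
  shows "\<exists>\<eta>\<in>{0<..<1}. \<forall>x\<in>{0<..<1}. x \<le> \<eta> \<longrightarrow> b < a * \<phi> x"
proof -
  have "max (b / a) 0 + 1 \<in> \<phi> ` {0<..<1}"
    using surj by (rule subsetD) simp
  then obtain \<eta> where \<eta>: "\<eta> \<in> {0<..<1}" "max (b / a) 0 + 1 = \<phi> \<eta>"
    by (rule imageE)
  have "b < a * \<phi> x" if "x \<in> {0<..<1}" "x \<le> \<eta>" for x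
  proof -
    have "b / a < \<phi> x"
      using \<phi>_decr[OF that(1) \<eta>(1) that(2)] \<eta>(2) by linarith
    then show ?thesis using a by (simp add: pos_divide_less_eq mult.commute)
  qed
  with \<eta>(1) show ?thesis by blast
qed

lemma real_card_mem_eq_sum_indicator:
  "finite K \<Longrightarrow> real (card {k \<in> K. x \<in> E k}) = (\<Sum>k\<in>K. indicator (E k) x)"
  by (simp add: indicator_def sum.If_cases Int_def)

lemma borel_measurable_card_mem:
  assumes "finite K" and "\<And>k. k \<in> K \<Longrightarrow> E k \<in> sets M"
  shows "(\<lambda>x. real (card {k \<in> K. x \<in> E k})) \<in> borel_measurable M"
  using assms by (simp add: real_card_mem_eq_sum_indicator)

lemma (in finite_measure) measure_card_mem_ge_le:
  assumes K: "finite K" and E: "\<And>k. k \<in> K \<Longrightarrow> E k \<in> sets M" and a: "0 < a"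
  shows "measure M {x \<in> space M. a \<le> real (card {k \<in> K. x \<in> E k})} \<le> (\<Sum>k\<in>K. measure M (E k)) / a"
proof -
  define u where "u x = (\<Sum>k\<in>K. indicator (E k) x :: real)" for x
  have integrable: "integrable M (indicator (E k) :: 'a \<Rightarrow> real)" if "k \<in> K" for k
    using E[OF that] by (intro integrable_real_indicator) (simp_all add: less_top[symmetric])
  have "measure M {x \<in> space M. a \<le> u x} \<le> (\<integral>x. u x \<partial>M) / a"
    unfolding u_def using integrable a
    by (intro integral_Markov_inequality_measure[OF _ sets.top]) (auto intro!: sum_nonneg)
  also have "(\<integral>x. u x \<partial>M) = (\<Sum>k\<in>K. measure M (E k))"
    unfolding u_def using integrable E by (simp add: Bochner_Integration.integral_sum)
  finally show ?thesis
    using K by (simp add: u_def real_card_mem_eq_sum_indicator)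
qed

lemma distr_Pair_replicate:
  fixes V :: "nat \<Rightarrow> 'a \<Rightarrow> 'v"
  assumes P: "prob_space P"
    and X: "X \<in> measurable P SX"
    and V: "\<And>i. 1 \<le> i \<Longrightarrow> V i \<in> measurable P SV"
    and XV_indep: "distr P (SX \<Otimes>\<^sub>M PiM {1..} (\<lambda>_. SV)) (\<lambda>\<omega>. (X \<omega>, restrict (\<lambda>i. V i \<omega>) {1..}))
                   = distr P SX X \<Otimes>\<^sub>M distr P (PiM {1..} (\<lambda>_. SV)) (\<lambda>\<omega>. restrict (\<lambda>i. V i \<omega>) {1..})"
    and i: "1 \<le> i"
  shows "distr P (SX \<Otimes>\<^sub>M SV) (\<lambda>\<omega>. (X \<omega>, V i \<omega>)) = distr P SX X \<Otimes>\<^sub>M distr P SV (V i)"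
proof -
  define PV where "PV = PiM {1::nat..} (\<lambda>_. SV)"
  define RV where "RV = (\<lambda>\<omega>. restrict (\<lambda>i. V i \<omega>) {1::nat..})"
  have RV: "RV \<in> measurable P PV"
    unfolding RV_def PV_def by (rule measurable_restrict) (use V in auto)
  have proj: "(\<lambda>f. f i) \<in> measurable PV SV"
    using i unfolding PV_def by (intro measurable_component_singleton) auto
  interpret DR: prob_space "distr P PV RV"
    using P RV by (rule prob_space.prob_space_distr)
  have "distr P (SX \<Otimes>\<^sub>M SV) (\<lambda>\<omega>. (X \<omega>, V i \<omega>))
      = distr (distr P (SX \<Otimes>\<^sub>M PV) (\<lambda>\<omega>. (X \<omega>, RV \<omega>))) (SX \<Otimes>\<^sub>M SV) (\<lambda>(x, f). (x, f i))"
    using X RV proj i by (subst distr_distr) (auto simp: RV_def comp_def)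
  also have "\<dots> = distr (distr P SX X \<Otimes>\<^sub>M distr P PV RV) (SX \<Otimes>\<^sub>M SV) (\<lambda>(x, f). (x, f i))"
    using XV_indep by (simp add: PV_def RV_def)
  also have "\<dots> = distr (distr P SX X) SX (\<lambda>x. x) \<Otimes>\<^sub>M distr (distr P PV RV) SV (\<lambda>f. f i)"
    using proj by (intro pair_measure_distr[symmetric] prob_space_imp_sigma_finite
        DR.prob_space_distr) auto
  also have "\<dots> = distr P SX X \<Otimes>\<^sub>M distr P SV (V i)"
    using RV proj i by (simp add: distr_distr comp_def RV_def distr_id2)
  finally show ?thesis .
qed

lemma measure_replicate_event_eq:
  fixes V :: "nat \<Rightarrow> 'a \<Rightarrow> 'v"
  assumes P: "prob_space P"
    and X: "X \<in> measurable P SX"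
    and V: "\<And>i. 1 \<le> i \<Longrightarrow> V i \<in> measurable P SV"
    and V_ident: "\<And>i. 1 \<le> i \<Longrightarrow> distr P SV (V i) = distr P SV (V 1)"
    and XV_indep: "\<And>i. 1 \<le> i \<Longrightarrow>
      distr P (SX \<Otimes>\<^sub>M SV) (\<lambda>\<omega>. (X \<omega>, V i \<omega>)) = distr P SX X \<Otimes>\<^sub>M distr P SV (V i)"
    and Q: "Measurable.pred (SX \<Otimes>\<^sub>M SV) (\<lambda>(x, v). Q x v)"
    and k: "1 \<le> k"
  shows "measure P {\<omega> \<in> space P. Q (X \<omega>) (V k \<omega>)} = measure P {\<omega> \<in> space P. Q (X \<omega>) (V 1 \<omega>)}"
proof -
  define A where "A = {z \<in> space (SX \<Otimes>\<^sub>M SV). Q (fst z) (snd z)}"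
  have A: "A \<in> sets (SX \<Otimes>\<^sub>M SV)"
    using Q by (simp add: A_def case_prod_beta')
  have "measure P {\<omega> \<in> space P. Q (X \<omega>) (V i \<omega>)} = measure (distr P SX X \<Otimes>\<^sub>M distr P SV (V 1)) A"
    if i: "1 \<le> i" for i
  proof -
    have XV: "(\<lambda>\<omega>. (X \<omega>, V i \<omega>)) \<in> measurable P (SX \<Otimes>\<^sub>M SV)"
      using X V[OF i] by measurable
    have "{\<omega> \<in> space P. Q (X \<omega>) (V i \<omega>)} = (\<lambda>\<omega>. (X \<omega>, V i \<omega>)) -` A \<inter> space P"
      using measurable_space[OF XV] by (auto simp: A_def)
    also have "measure P \<dots> = measure (distr P (SX \<Otimes>\<^sub>M SV) (\<lambda>\<omega>. (X \<omega>, V i \<omega>))) A"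
      using XV A by (simp add: measure_distr)
    finally show ?thesis
      by (simp add: XV_indep[OF i] V_ident[OF i])
  qed
  from this[OF k] this[of 1] show ?thesis by simp
qed

lemma borel_measurable_boot_pval:
  fixes t :: "'a \<Rightarrow> nat \<Rightarrow> real"
  assumes [measurable]: "\<And>k. (\<lambda>x. t x k) \<in> borel_measurable M"
  shows "(\<lambda>x. boot_pval m (t x) i) \<in> borel_measurable M"
proof -
  have "(\<lambda>x. boot_pval m (t x) i)
      = (\<lambda>x. 1 / (real m + 1) * (1 / 2 + (\<Sum>k = 1..m. if t x i \<le> t x k then 1 else 0)))"
    by (simp add: boot_pval_def sum.If_cases Int_def)
  also have "\<dots> \<in> borel_measurable M"
    by measurable
  finally show ?thesis .
qed

lemma borel_measurable_boot_pval_replicates: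
  fixes V :: "nat \<Rightarrow> 'a \<Rightarrow> 'v" and Ts :: "'x \<Rightarrow> real" and Tb :: "'x \<Rightarrow> 'v \<Rightarrow> real"
  assumes X: "X \<in> measurable P SX"
    and V: "\<And>i. 1 \<le> i \<Longrightarrow> V i \<in> measurable P SV"
    and Ts: "Ts \<in> borel_measurable SX"
    and Tb: "(\<lambda>(x, v). Tb x v) \<in> borel_measurable (SX \<Otimes>\<^sub>M SV)"
  shows "(\<lambda>\<omega>. boot_pval m (\<lambda>k. if k = 0 then Ts (X \<omega>) else Tb (X \<omega>) (V k \<omega>)) i) \<in> borel_measurable P"
proof (rule borel_measurable_boot_pval)
  fix k :: nat
  show "(\<lambda>\<omega>. if k = 0 then Ts (X \<omega>) else Tb (X \<omega>) (V k \<omega>)) \<in> borel_measurable P"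
  proof (cases "k = 0")
    case True
    then show ?thesis using measurable_compose[OF X Ts] by simp
  next
    case False
    then show ?thesis using measurable_compose[OF measurable_Pair[OF X V] Tb] by simp
  qed
qed

lemma measure_boot_pval_gt_le:
  fixes V :: "nat \<Rightarrow> 'a \<Rightarrow> 'v" and Ts :: "'x \<Rightarrow> real" and Tb :: "'x \<Rightarrow> 'v \<Rightarrow> real"
  assumes P: "prob_space P"
    and X: "X \<in> measurable P SX"
    and V: "\<And>i. 1 \<le> i \<Longrightarrow> V i \<in> measurable P SV"
    and V_ident: "\<And>i. 1 \<le> i \<Longrightarrow> distr P SV (V i) = distr P SV (V 1)"
    and XV_indep: "\<And>i. 1 \<le> i \<Longrightarrow>
      distr P (SX \<Otimes>\<^sub>M SV) (\<lambda>\<omega>. (X \<omega>, V i \<omega>)) = distr P SX X \<Otimes>\<^sub>M distr P SV (V i)"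
    and Ts: "Ts \<in> borel_measurable SX"
    and Tb: "(\<lambda>(x, v). Tb x v) \<in> borel_measurable (SX \<Otimes>\<^sub>M SV)"
    and m\<eta>: "1 \<le> real m * \<eta>"
  shows "measure P {\<omega> \<in> space P. \<eta> < boot_pval m (\<lambda>k. if k = 0 then Ts (X \<omega>) else Tb (X \<omega>) (V k \<omega>)) 0}
           \<le> 2 / \<eta> * measure P {\<omega> \<in> space P. Ts (X \<omega>) \<le> Tb (X \<omega>) (V 1 \<omega>)}"
proof -
  interpret prob_space P by (rule P)
  define t where "t \<omega> = (\<lambda>k. if k = 0 then Ts (X \<omega>) else Tb (X \<omega>) (V k \<omega>))" for \<omega>
  define E where "E k = {\<omega> \<in> space P. Ts (X \<omega>) \<le> Tb (X \<omega>) (V k \<omega>)}" for k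
  have Q: "Measurable.pred (SX \<Otimes>\<^sub>M SV) (\<lambda>(x, v). Ts x \<le> Tb x v)"
    using Ts Tb by measurable
  have E: "E k \<in> sets P" if "1 \<le> k" for k
    using X V[OF that] Q unfolding E_def by measurable
  have "0 < real m * \<eta>" using m\<eta> by linarith
  then have m: "0 < real m" and \<eta>: "0 < \<eta>"
    by (auto simp: zero_less_mult_iff)
  have card_eq: "{k \<in> {1..m}. t \<omega> 0 \<le> t \<omega> k} = {k \<in> {1..m}. \<omega> \<in> E k}" if "\<omega> \<in> space P" for \<omega>
    using that by (auto simp: t_def E_def)
  have card_meas: "(\<lambda>\<omega>. real (card {k \<in> {1..m}. \<omega> \<in> E k})) \<in> borel_measurable P"
    using E by (intro borel_measurable_card_mem) auto
  have "{\<omega> \<in> space P. \<eta> < boot_pval m (t \<omega>) 0}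
      \<subseteq> {\<omega> \<in> space P. real m * \<eta> / 2 \<le> real (card {k \<in> {1..m}. \<omega> \<in> E k})}"
  proof clarify
    fix \<omega> assume \<omega>: "\<omega> \<in> space P" and "\<eta> < boot_pval m (t \<omega>) 0"
    from card_ge_if_boot_pval_gt[OF this(2) m\<eta>]
    show "real m * \<eta> / 2 \<le> real (card {k \<in> {1..m}. \<omega> \<in> E k})"
      unfolding card_eq[OF \<omega>] .
  qed
  moreover have "{\<omega> \<in> space P. real m * \<eta> / 2 \<le> real (card {k \<in> {1..m}. \<omega> \<in> E k})} \<in> sets P"
    using card_meas by measurable
  ultimately have "measure P {\<omega> \<in> space P. \<eta> < boot_pval m (t \<omega>) 0}
      \<le> measure P {\<omega> \<in> space P. real m * \<eta> / 2 \<le> real (card {k \<in> {1..m}. \<omega> \<in> E k})}"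
    by (rule finite_measure_mono)
  also have "\<dots> \<le> (\<Sum>k = 1..m. measure P (E k)) / (real m * \<eta> / 2)"
    using E m \<eta> by (intro measure_card_mem_ge_le) simp_all
  also have "(\<Sum>k = 1..m. measure P (E k)) = (\<Sum>k = 1..m. measure P (E 1))"
    unfolding E_def
    by (intro sum.cong refl measure_replicate_event_eq[where X = X and V = V, OF P X V V_ident XV_indep Q])
      auto
  also have "\<dots> / (real m * \<eta> / 2) = 2 / \<eta> * measure P (E 1)"
    using m by simp
  finally show ?thesis
    by (simp add: E_def t_def)
qed

lemma measure_comb_pval_gt_le:
  fixes V :: "nat \<Rightarrow> 'a \<Rightarrow> 'v" and T :: "nat \<Rightarrow> 'x \<Rightarrow> real" and Tb :: "nat \<Rightarrow> 'x \<Rightarrow> 'v \<Rightarrow> real"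
    and \<phi> :: "real \<Rightarrow> real" and w :: "nat \<Rightarrow> real"
  assumes P: "prob_space P"
    and X: "X \<in> measurable P SX"
    and V: "\<And>i. 1 \<le> i \<Longrightarrow> V i \<in> measurable P SV"
    and V_ident: "\<And>i. 1 \<le> i \<Longrightarrow> distr P SV (V i) = distr P SV (V 1)"
    and XV_indep: "\<And>i. 1 \<le> i \<Longrightarrow>
      distr P (SX \<Otimes>\<^sub>M SV) (\<lambda>\<omega>. (X \<omega>, V i \<omega>)) = distr P SX X \<Otimes>\<^sub>M distr P SV (V i)"
    and T: "T j0 \<in> borel_measurable SX"
    and Tb: "(\<lambda>(x, v). Tb j0 x v) \<in> borel_measurable (SX \<Otimes>\<^sub>M SV)"
    and w_nonneg: "\<And>j. j \<in> {1..r} \<Longrightarrow> 0 \<le> w j"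
    and \<phi>_decr: "\<And>x y. x \<in> {0<..<1} \<Longrightarrow> y \<in> {0<..<1} \<Longrightarrow> x \<le> y \<Longrightarrow> \<phi> y \<le> \<phi> x"
    and \<phi>_nonneg: "\<And>x. x \<in> {0<..<1} \<Longrightarrow> 0 \<le> \<phi> x"
    and j0: "j0 \<in> {1..r}"
    and c: "c \<in> {0<..<1}" and e: "2 * real r * c < e"
    and large: "\<And>x. x \<in> {0<..<1} \<Longrightarrow> x \<le> \<eta> \<Longrightarrow> \<phi> c * (\<Sum>j = 1..r. w j) < w j0 * \<phi> x"
    and m\<eta>: "1 \<le> real m * \<eta>"
  shows "measure P {\<omega> \<in> space P. e < \<bar>comb_pval m (comb_stat (\<lambda>p. \<Sum>j = 1..r. w j * \<phi> (p j)) m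
             (\<lambda>i j. if i = 0 then T j (X \<omega>) else Tb j (X \<omega>) (V i \<omega>)))\<bar>}
           \<le> 2 / \<eta> * measure P {\<omega> \<in> space P. T j0 (X \<omega>) \<le> Tb j0 (X \<omega>) (V 1 \<omega>)}"
proof -
  interpret prob_space P by (rule P)
  define Y where "Y \<omega> = comb_pval m (comb_stat (\<lambda>p. \<Sum>j = 1..r. w j * \<phi> (p j)) m
    (\<lambda>i j. if i = 0 then T j (X \<omega>) else Tb j (X \<omega>) (V i \<omega>)))" for \<omega>
  define p where "p \<omega> = boot_pval m (\<lambda>k. if k = 0 then T j0 (X \<omega>) else Tb j0 (X \<omega>) (V k \<omega>)) 0" for \<omega>
  have m: "1 \<le> m" using m\<eta> by (cases m) auto
  have "{\<omega> \<in> space P. e < \<bar>Y \<omega>\<bar>} \<subseteq> {\<omega> \<in> space P. \<eta> < p \<omega>}"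
  proof clarify
    fix \<omega> assume "e < \<bar>Y \<omega>\<bar>"
    show "\<eta> < p \<omega>"
    proof (rule ccontr)
      assume "\<not> \<eta> < p \<omega>"
      then have "\<phi> c * (\<Sum>j = 1..r. w j) < w j0 * \<phi> (p \<omega>)"
        using large boot_pval_gt_0 boot_pval_less_1 by (simp add: p_def)
      then have "Y \<omega> \<le> 2 * real r * c"
        unfolding Y_def p_def
        by (intro comb_pval_weighted_sum_le[OF m c w_nonneg \<phi>_decr \<phi>_nonneg j0]) simp
      moreover have "0 \<le> Y \<omega>"
        by (simp add: Y_def comb_pval_def)
      ultimately show False
        using e \<open>e < \<bar>Y \<omega>\<bar>\<close> by simp
    qed
  qed
  moreover have "{\<omega> \<in> space P. \<eta> < p \<omega>} \<in> sets P"
    using borel_measurable_boot_pval_replicates[OF X V T Tb] unfolding p_def by measurable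
  ultimately have "measure P {\<omega> \<in> space P. e < \<bar>Y \<omega>\<bar>} \<le> measure P {\<omega> \<in> space P. \<eta> < p \<omega>}"
    by (rule finite_measure_mono)
  also have "\<dots> \<le> 2 / \<eta> * measure P {\<omega> \<in> space P. T j0 (X \<omega>) \<le> Tb j0 (X \<omega>) (V 1 \<omega>)}"
    unfolding p_def by (rule measure_boot_pval_gt_le[where X = X and V = V, OF P X V V_ident XV_indep T Tb m\<eta>])
  finally show ?thesis
    unfolding Y_def .
qed

theorem proposition2:
  fixes P :: "'a measure"
    and SX :: "nat \<Rightarrow> 'x measure" and SV :: "nat \<Rightarrow> 'v measure"
    and X :: "nat \<Rightarrow> 'a \<Rightarrow> 'x" and V :: "nat \<Rightarrow> nat \<Rightarrow> 'a \<Rightarrow> 'v"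
    and Tstat :: "nat \<Rightarrow> nat \<Rightarrow> 'x \<Rightarrow> real"
    and Tboot :: "nat \<Rightarrow> nat \<Rightarrow> 'x \<Rightarrow> 'v \<Rightarrow> real"
    and r :: nat and Mn :: "nat \<Rightarrow> nat"
    and \<phi> :: "real \<Rightarrow> real" and w :: "nat \<Rightarrow> real"
    and H0 :: "nat \<Rightarrow> bool" and j0 :: nat
  assumes prob: "prob_space P"
    and r_pos: "r \<ge> 1"
    \<comment> \<open>data and resampling randomness\<close>
    and X_meas: "\<And>n. X n \<in> measurable P (SX n)"
    and V_meas: "\<And>n i. i \<ge> 1 \<Longrightarrow> V n i \<in> measurable P (SV n)"
    and V_indep: "\<And>n. prob_space.indep_vars P (\<lambda>_. SV n) (V n) {1..}"
    and V_ident: "\<And>n i. i \<ge> 1 \<Longrightarrow> distr P (SV n) (V n i) = distr P (SV n) (V n 1)"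
    and XV_indep: "\<And>n. distr P (SX n \<Otimes>\<^sub>M PiM {1..} (\<lambda>_. SV n))
                        (\<lambda>\<omega>. (X n \<omega>, restrict (\<lambda>i. V n i \<omega>) {1..}))
                      = distr P (SX n) (X n) \<Otimes>\<^sub>M
                        distr P (PiM {1..} (\<lambda>_. SV n)) (\<lambda>\<omega>. restrict (\<lambda>i. V n i \<omega>) {1..})"
    \<comment> \<open>test statistics T_{n,j} = T_{n,j}(X_n) and replicates T_{n,j}^[i] = T_{n,j}^[i](X_n, V_n^[i])\<close>
    and T_meas: "\<And>n j. Tstat n j \<in> borel_measurable (SX n)"
    and Tb_meas: "\<And>n j. (\<lambda>(x, v). Tboot n j x v) \<in> borel_measurable (SX n \<Otimes>\<^sub>M SV n)"
    \<comment> \<open>M = M_n tends to infinity\<close>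
    and Mn_lim: "filterlim Mn at_top sequentially"
    \<comment> \<open>(i) form of the combining function\<close>
    and w_pos: "\<And>j. j \<in> {1..r} \<Longrightarrow> w j > 0"
    and \<phi>_bij: "bij_betw \<phi> {0<..<1} {0<..}"
    and \<phi>_decr: "\<And>x y. x \<in> {0<..<1} \<Longrightarrow> y \<in> {0<..<1} \<Longrightarrow> x \<le> y \<Longrightarrow> \<phi> y \<le> \<phi> x"
    and \<phi>_nonneg: "\<And>x. x \<in> {0<..<1} \<Longrightarrow> \<phi> x \<ge> 0"
    \<comment> \<open>(ii) a false null hypothesis whose test is consistent\<close>
    and j0: "j0 \<in> {1..r}"
    and H0_false: "\<not> H0 j0"
    and consistent: "(\<lambda>n. measure P {\<omega> \<in> space P.
                        Tboot n j0 (X n \<omega>) (V n 1 \<omega>) \<ge> Tstat n j0 (X n \<omega>)}) \<longlonglongrightarrow> 0"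
    \<comment> \<open>(iii) no ties among the bootstrap replicates\<close>
    and no_ties: "\<And>n. AE \<omega> in P. \<forall>j\<in>{1..r}. \<forall>k\<in>{1..Mn n}. \<forall>k'\<in>{1..Mn n}.
                    k \<noteq> k' \<longrightarrow> Tboot n j (X n \<omega>) (V n k \<omega>) \<noteq> Tboot n j (X n \<omega>) (V n k' \<omega>)"
  shows "tendsto_in_prob P
           (\<lambda>n \<omega>. comb_pval (Mn n)
              (comb_stat (\<lambda>p. \<Sum>j = 1..r. w j * \<phi> (p j)) (Mn n)
                 (\<lambda>i j. if i = 0 then Tstat n j (X n \<omega>) else Tboot n j (X n \<omega>) (V n i \<omega>))))
           0"
proof -
  define Y where "Y = (\<lambda>n \<omega>. comb_pval (Mn n)
    (comb_stat (\<lambda>p. \<Sum>j = 1..r. w j * \<phi> (p j)) (Mn n)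
      (\<lambda>i j. if i = 0 then Tstat n j (X n \<omega>) else Tboot n j (X n \<omega>) (V n i \<omega>))))"
  define q where "q n = measure P {\<omega> \<in> space P. Tstat n j0 (X n \<omega>) \<le> Tboot n j0 (X n \<omega>) (V n 1 \<omega>)}"
    for n
  have XV_indep_replicate: "distr P (SX n \<Otimes>\<^sub>M SV n) (\<lambda>\<omega>. (X n \<omega>, V n i \<omega>))
      = distr P (SX n) (X n) \<Otimes>\<^sub>M distr P (SV n) (V n i)" if "1 \<le> i" for n i
    using distr_Pair_replicate[OF prob X_meas V_meas XV_indep that] .
  have w_nonneg: "0 \<le> w j" if "j \<in> {1..r}" for j
    using w_pos[OF that] by simp
  have \<phi>_surj: "{0<..} \<subseteq> \<phi> ` {0<..<1}"
    using \<phi>_bij by (simp add: bij_betw_def)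
  have M_infty: "filterlim (\<lambda>n. real (Mn n)) at_top sequentially"
    using filterlim_compose[OF filterlim_real_sequentially Mn_lim] by (simp add: comp_def)
  show ?thesis
    unfolding Y_def[symmetric] tendsto_in_prob_def diff_zero
  proof (intro allI impI)
    fix e :: real assume "0 < e"
    define c where "c = min (1 / 2) (e / (4 * real r))"
    have c: "c \<in> {0<..<1}" and rc: "2 * real r * c < e"
      using \<open>0 < e\<close> r_pos by (auto simp: c_def min_def field_simps)
    have "0 < w j0" using w_pos j0 by simp
    from large_near_0_if_surj[OF \<phi>_surj \<phi>_decr this, where b = "\<phi> c * (\<Sum>j = 1..r. w j)"]
    obtain \<eta> where \<eta>: "\<eta> \<in> {0<..<1}"
      and large: "\<And>x. x \<in> {0<..<1} \<Longrightarrow> x \<le> \<eta> \<Longrightarrow> \<phi> c * (\<Sum>j = 1..r. w j) < w j0 * \<phi> x"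
      by blast
    have bound: "measure P {\<omega> \<in> space P. e < \<bar>Y n \<omega>\<bar>} \<le> 2 / \<eta> * q n"
      if "1 \<le> real (Mn n) * \<eta>" for n
      unfolding Y_def q_def
      by (rule measure_comb_pval_gt_le[where T = "Tstat n" and Tb = "Tboot n" and V = "V n" and w = w
          and \<phi> = \<phi>, OF prob X_meas V_meas V_ident XV_indep_replicate T_meas Tb_meas w_nonneg
          \<phi>_decr \<phi>_nonneg j0 c rc large that])
    have "\<forall>\<^sub>F n in sequentially. 1 \<le> real (Mn n) * \<eta>"
      using filterlim_tendsto_pos_mult_at_top[OF tendsto_const _ M_infty, of \<eta>] \<eta>
      by (simp add: filterlim_at_top mult.commute)
    then have upper: "\<forall>\<^sub>F n in sequentially. measure P {\<omega> \<in> space P. e < \<bar>Y n \<omega>\<bar>} \<le> 2 / \<eta> * q n"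
      by (rule eventually_mono) (rule bound)
    have lim: "(\<lambda>n. 2 / \<eta> * q n) \<longlonglongrightarrow> 0"
      using tendsto_mult[OF tendsto_const consistent, of "2 / \<eta>"] by (simp add: q_def)
    show "(\<lambda>n. measure P {\<omega> \<in> space P. e < \<bar>Y n \<omega>\<bar>}) \<longlonglongrightarrow> 0"
      by (rule tendsto_sandwich[OF _ upper tendsto_const lim]) simp
  qed
qed

end
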